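(* Let $L$ be a construction of an ASC-hypergraph $H$, let $Y\in L$ and $Z=\bigcup H\setminus Y$. Then $L_Y$ and ${}_Z L$ are the unique constructions $K$ of $H_Y$ and $J$ of ${}_Z H$ such that $K\ast J=L$.
   Context: A hypergraph is a finite set $H$ of nonempty subsets of some finite set; its carrier is $\bigcup H$. For a family $F$ and set $Y$, $F_Y=\{X\in F\mid X\subseteq Y\}$, and ${}_Z F=\{X\cap Z\mid X\in F,\ X\cap Z\neq\emptyset\}$. For $X\subseteq\bigcup H$, $X\cup_H Y=X\cup Y$ if $X\cup Y\in H$, and $X\cup_H Y=X$ otherwise. For constructions $K$ of $H_Y$ and $J$ of ${}_Z H$ the continuation is $K\ast J=K\cup\{X\cup_H Y\mid X\in J\}$. A hypergraph partition of $H$ is a partition $\{H_1,\dots,H_n\}$ ($n\ge0$) of the set $H$ with $\{\bigcup H_1,\dots,\bigcup H_n\}$ a partition of $\bigcup H$; $H$ is connected if it has exactly one hypergraph partition; the finest hypergraph partition is the unique one whose blocks are connected. $H$ is atomic if $\{x\}\in H$ for all $x\in\bigcup H$; saturated if $X_1,X_2\in H$ with $X_1\cap X_2\neq\emptyset$ imply $X_1\cup X_2\in H$. An ASC-hypergraph is one that is atomic, saturated and connected. Constructions of an atomic $H$, by induction on $|\bigcup H|$: (0) $\emptyset$ is the only construction of $\emptyset$; (1) if $|\bigcup H|\ge1$, $H$ connected, $x\in\bigcup H$, $K$ a construction of $H_{\bigcup H\setminus\{x\}}$, then $K\cup\{\bigcup H\}$ is a construction of $H$; (2) if $H$ is not connected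 with finest hypergraph partition $\{H_1,\dots,H_n\}$, $n\ge2$, and $K_i$ is a construction of $H_i$, then $K_1\cup\dots\cup K_n$ is a construction of $H$. *)

theory Defs
  imports "HOL-Library.Disjoint_Sets"
begin

definition hypergraph :: "'a set set \<Rightarrow> bool" where
  "hypergraph H \<longleftrightarrow> finite H \<and> {} \<notin> H \<and> (\<forall>X\<in>H. finite X)"

definition restr :: "'a set set \<Rightarrow> 'a set \<Rightarrow> 'a set set" where
  "restr F Y = {X \<in> F. X \<subseteq> Y}"

definition trace :: "'a set \<Rightarrow> 'a set set \<Rightarrow> 'a set set" where
  "trace Z F = {X \<inter> Z | X. X \<in> F \<and> X \<inter> Z \<noteq> {}}"

definition hunion :: "'a set set \<Rightarrow> 'a set \<Rightarrow> 'a set \<Rightarrow> 'a set" where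
  "hunion H X Y = (if X \<union> Y \<in> H then X \<union> Y else X)"

definition continuation :: "'a set set \<Rightarrow> 'a set \<Rightarrow> 'a set set \<Rightarrow> 'a set set \<Rightarrow> 'a set set" where
  "continuation H Y K J = K \<union> {hunion H X Y | X. X \<in> J}"

definition hyp_partition :: "'a set set \<Rightarrow> 'a set set set \<Rightarrow> bool" where
  "hyp_partition H P \<longleftrightarrow> partition_on H P \<and> partition_on (\<Union>H) (Union ` P) \<and> inj_on Union P"

definition hconnected :: "'a set set \<Rightarrow> bool" where
  "hconnected H \<longleftrightarrow> (\<exists>!P. hyp_partition H P)"

text \<open>P is the finest hypergraph partition: the (unique) one whose blocks are connected.\<close>
definition finest_hyp_partition :: "'a set set \<Rightarrow> 'a set set set \<Rightarrow> bool" where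
  "finest_hyp_partition H P \<longleftrightarrow> hyp_partition H P \<and> (\<forall>B\<in>P. hconnected B)"

definition atomic :: "'a set set \<Rightarrow> bool" where
  "atomic H \<longleftrightarrow> (\<forall>x\<in>\<Union>H. {x} \<in> H)"

definition saturated :: "'a set set \<Rightarrow> bool" where
  "saturated H \<longleftrightarrow> (\<forall>X1\<in>H. \<forall>X2\<in>H. X1 \<inter> X2 \<noteq> {} \<longrightarrow> X1 \<union> X2 \<in> H)"

definition ASC :: "'a set set \<Rightarrow> bool" where
  "ASC H \<longleftrightarrow> hypergraph H \<and> atomic H \<and> saturated H \<and> hconnected H"

inductive construction :: "'a set set \<Rightarrow> 'a set set \<Rightarrow> bool" where
  empty: "construction {} {}"
| conn: "\<lbrakk> hypergraph H; atomic H; \<Union>H \<noteq> {}; hconnected H; x \<in> \<Union>H;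
           construction (restr H (\<Union>H - {x})) K \<rbrakk>
         \<Longrightarrow> construction H (insert (\<Union>H) K)"
| disconn: "\<lbrakk> hypergraph H; atomic H; \<not> hconnected H; finest_hyp_partition H P;
              card P \<ge> 2; \<forall>B\<in>P. construction B (f B) \<rbrakk>
         \<Longrightarrow> construction H (\<Union>B\<in>P. f B)"

end

theory Submission
  imports Defs
begin

(*
  Say that L "splits at" Y if L_Y is a construction of H_Y, _Z L is a
  construction of _Z H, and L = L_Y * _Z L.  Existence is proved by induction
  on the construction L, assuming only that H is saturated.  In the connected case L = K \<union> {\<Union>H}
  with Y \<in> K, and the splitting of K is extended by the top set Z of _Z H
  (saturation guarantees \<Union>H \<in> H, so Z \<in> _Z H).  In the disconnected case Y
  lies in the construction of one block B0 of the finest partition; the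
  splitting of B0 is combined with the untouched constructions of the other
  blocks, which are glued back together by rule (2).
  Uniqueness is set-theoretic: if the members of K lie in Y and those of J are
  nonempty subsets of Z, Y and Z disjoint, then K and J are the restriction to
  Y and the trace on Z of K * J.
*)

section \<open>Hypergraph partitions\<close>

lemma hyp_partitionD:
  assumes "hyp_partition H P"
  shows hyp_partition_Union: "\<Union>P = H"
    and hyp_partition_nonempty_block: "{} \<notin> P"
    and hyp_partition_nonempty_carrier: "B \<in> P \<Longrightarrow> \<Union>B \<noteq> {}"
    and hyp_partition_disjoint_carriers:
      "B1 \<in> P \<Longrightarrow> B2 \<in> P \<Longrightarrow> B1 \<noteq> B2 \<Longrightarrow> \<Union>B1 \<inter> \<Union>B2 = {}"
proof -
  have P: "partition_on H P" and UP: "partition_on (\<Union>H) (Union ` P)" and inj: "inj_on Union P"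
    using assms unfolding hyp_partition_def by auto
  show "\<Union>P = H" "{} \<notin> P" using P unfolding partition_on_def by auto
  show "\<Union>B \<noteq> {}" if "B \<in> P"
  proof
    assume "\<Union>B = {}"
    then have "{} \<in> Union ` P" using that by (metis image_eqI)
    then show False using UP unfolding partition_on_def by simp
  qed
  show "\<Union>B1 \<inter> \<Union>B2 = {}" if "B1 \<in> P" "B2 \<in> P" "B1 \<noteq> B2"
  proof -
    have "\<Union>B1 \<noteq> \<Union>B2" using that inj unfolding inj_on_def by blast
    moreover have "disjoint (Union ` P)" using UP unfolding partition_on_def by auto
    ultimately show ?thesis using that unfolding disjoint_def by blast
  qed
qed

lemma hyp_partitionI:
  assumes "\<Union>P = H" and "\<And>A B. A \<in> P \<Longrightarrow> B \<in> P \<Longrightarrow> A \<noteq> B \<Longrightarrow> A \<inter> B = {}"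
    and "{} \<notin> P"
    and disj: "\<And>A B. A \<in> P \<Longrightarrow> B \<in> P \<Longrightarrow> A \<noteq> B \<Longrightarrow> \<Union>A \<inter> \<Union>B = {}"
    and ne: "\<And>A. A \<in> P \<Longrightarrow> \<Union>A \<noteq> {}"
  shows "hyp_partition H P"
  unfolding hyp_partition_def
proof (intro conjI)
  show "partition_on H P" unfolding partition_on_def disjoint_def using assms(1-3) by simp
  show "inj_on Union P"
  proof (rule inj_onI)
    fix A B assume "A \<in> P" "B \<in> P" "\<Union>A = \<Union>B"
    then show "A = B" using disj[of A B] ne[of A] by auto
  qed
  show "partition_on (\<Union>H) (Union ` P)"
    unfolding partition_on_def disjoint_def
  proof (intro conjI ballI impI)
    show "\<Union>(Union ` P) = \<Union>H" using assms(1) by auto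
    show "{} \<notin> Union ` P" using ne by force
    fix a b assume "a \<in> Union ` P" "b \<in> Union ` P" "a \<noteq> b"
    then show "a \<inter> b = {}" using disj by auto
  qed
qed

lemma hyp_partition_member:
  assumes "hyp_partition H P" "X \<in> H" "B \<in> P" "X \<inter> \<Union>B \<noteq> {}"
  shows "X \<in> B"
proof -
  obtain B' where "B' \<in> P" "X \<in> B'" using assms(1,2) hyp_partition_Union by blast
  then show ?thesis using hyp_partition_disjoint_carriers[OF assms(1) _ assms(3)] assms(4) by blast
qed

lemma hyp_partition_trivial: "{} \<notin> H \<Longrightarrow> H \<noteq> {} \<Longrightarrow> hyp_partition H {H}"
  by (rule hyp_partitionI) auto

lemma not_hconnectedI:
  "hyp_partition H P \<Longrightarrow> {} \<notin> H \<Longrightarrow> H \<noteq> {} \<Longrightarrow> P \<noteq> {H} \<Longrightarrow> \<not> hconnected H"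
  unfolding hconnected_def using hyp_partition_trivial by metis

section \<open>Connectivity and the top edge\<close>

text \<open>A hypergraph containing its whole carrier as an edge is connected: the
  block containing that edge must absorb every other block.\<close>
lemma hconnected_if_carrier_mem:
  assumes ne: "{} \<notin> G" and top: "\<Union>G \<in> G"
  shows "hconnected G"
  unfolding hconnected_def
proof
  show "hyp_partition G {G}" using assms by (intro hyp_partition_trivial) auto
next
  fix P assume P: "hyp_partition G P"
  then obtain B where B: "B \<in> P" "\<Union>G \<in> B" using top hyp_partition_Union by blast
  have "B' = B" if B': "B' \<in> P" for B'
  proof (rule ccontr)
    assume "B' \<noteq> B"
    then have "\<Union>B' \<inter> \<Union>B = {}"
      using hyp_partition_disjoint_carriers[OF P B' B(1)] by simp
    moreover have "\<Union>B' \<subseteq> \<Union>G" using B' hyp_partition_Union[OF P] by blast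
    moreover have "\<Union>G \<subseteq> \<Union>B" using B(2) by blast
    ultimately show False using hyp_partition_nonempty_carrier[OF P B'] by blast
  qed
  then have "P = {B}" using B(1) by blast
  then show "P = {G}" using hyp_partition_Union[OF P] by auto
qed

text \<open>Conversely, a connected saturated hypergraph contains its carrier: a
  maximal edge M is disjoint from every edge not inside M (saturation), so
  the edges inside and outside M would form a nontrivial partition.\<close>
lemma carrier_mem_if_hconnected:
  assumes "hypergraph H" "saturated H" "hconnected H" "H \<noteq> {}"
  shows "\<Union>H \<in> H"
proof -
  have fin: "finite H" and ne: "{} \<notin> H" using assms(1) unfolding hypergraph_def by auto
  obtain M where M: "M \<in> H" "\<forall>X\<in>H. M \<subseteq> X \<longrightarrow> M = X"
    using finite_has_maximal[OF fin assms(4)] by blast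
  have disj: "X \<inter> M = {}" if "X \<in> H" "\<not> X \<subseteq> M" for X
  proof (rule ccontr)
    assume "X \<inter> M \<noteq> {}"
    then have "X \<union> M \<in> H" using assms(2) that(1) M(1) unfolding saturated_def by auto
    then show False using M(2) that(2) by auto
  qed
  define A where "A = {X\<in>H. X \<subseteq> M}"
  define B where "B = H - A"
  have "B = {}"
  proof (rule ccontr)
    assume Bne: "B \<noteq> {}"
    have UA: "\<Union>A = M" using M(1) unfolding A_def by blast
    have AB: "A \<union> B = H" "A \<inter> B = {}" unfolding B_def A_def by blast+
    have Ane: "A \<noteq> {}" using M(1) unfolding A_def by blast
    have "hyp_partition H {A, B}"
    proof (rule hyp_partitionI)
      have "\<Union>A \<inter> \<Union>B = {}"
      proof -
        have "X \<inter> M = {}" if "X \<in> B" for X using disj that unfolding B_def A_def by blast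
        then show ?thesis unfolding UA by blast
      qed
      then show "\<Union>S \<inter> \<Union>T = {}" if "S \<in> {A, B}" "T \<in> {A, B}" "S \<noteq> T" for S T
        using that by auto
      have "\<Union>A \<noteq> {}" using UA M(1) ne by auto
      moreover have "\<Union>B \<noteq> {}"
      proof -
        obtain X where "X \<in> B" using Bne by blast
        moreover have "X \<noteq> {}" using calculation ne unfolding B_def by blast
        ultimately show ?thesis by blast
      qed
      ultimately show "\<Union>S \<noteq> {}" if "S \<in> {A, B}" for S
        using that by auto
      show "\<Union>{A, B} = H" using AB(1) by simp
      show "S \<inter> T = {}" if "S \<in> {A, B}" "T \<in> {A, B}" "S \<noteq> T" for S T
      proof -
        from that consider "S = A" "T = B" | "S = B" "T = A" by auto
        then show ?thesis using AB(2) by cases (simp_all add: Int_commute)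
      qed
      show "{} \<notin> {A, B}" using Ane Bne by simp
    qed
    moreover have "{A, B} \<noteq> {H}"
    proof
      assume "{A, B} = {H}"
      then have "B = H" by (metis insertCI singletonD)
      then show False using Ane AB by blast
    qed
    ultimately show False using not_hconnectedI[of H "{A, B}"] assms(3,4) ne by blast
  qed
  then have "\<Union>H = M" using M(1) unfolding B_def A_def by auto
  then show ?thesis using M(1) by simp
qed

section \<open>Restrictions and traces\<close>

lemma saturated_restr: "saturated H \<Longrightarrow> saturated (restr H S)"
  unfolding saturated_def restr_def by auto

lemma Union_restr: "atomic H \<Longrightarrow> \<Union>(restr H S) = S \<inter> \<Union>H"
  unfolding atomic_def restr_def by blast

lemma trace_conv_image: "trace Z H = (\<lambda>X. X \<inter> Z) ` {X\<in>H. X \<inter> Z \<noteq> {}}"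
  unfolding trace_def by auto

lemma hypergraph_trace: "hypergraph H \<Longrightarrow> hypergraph (trace Z H)"
  unfolding hypergraph_def trace_conv_image by auto

lemma atomic_trace: "atomic H \<Longrightarrow> atomic (trace Z H)"
  unfolding atomic_def trace_def by fastforce

lemma Union_trace: "atomic H \<Longrightarrow> \<Union>(trace Z H) = Z \<inter> \<Union>H"
proof
  show "\<Union>(trace Z H) \<subseteq> Z \<inter> \<Union>H" unfolding trace_def by blast
  show "Z \<inter> \<Union>H \<subseteq> \<Union>(trace Z H)" if "atomic H"
  proof
    fix y assume "y \<in> Z \<inter> \<Union>H"
    then have "{y} \<in> H" "{y} \<inter> Z = {y}" using that unfolding atomic_def by auto
    then have "{y} \<in> trace Z H" unfolding trace_def by force
    then show "y \<in> \<Union>(trace Z H)" by blast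
  qed
qed

lemma trace_empty: "trace {} A = {}"
  unfolding trace_def by simp

lemma trace_Un: "trace Z (A \<union> B) = trace Z A \<union> trace Z B"
  unfolding trace_def by blast

lemma trace_cong: "(\<And>W. W \<in> A \<Longrightarrow> W \<inter> Z = W \<inter> Z') \<Longrightarrow> trace Z A = trace Z' A"
  unfolding trace_def by (metis (no_types, lifting))

lemma trace_id:
  assumes "\<And>W. W \<in> A \<Longrightarrow> W \<noteq> {} \<and> W \<subseteq> Z"
  shows "trace Z A = A"
proof -
  have "trace Z A = {W \<inter> Z | W. W \<in> A \<and> W \<inter> Z \<noteq> {}}" unfolding trace_def ..
  also have "\<dots> = {W | W. W \<in> A}"
  proof -
    have "W \<inter> Z = W \<and> W \<inter> Z \<noteq> {}" if "W \<in> A" for W using assms[OF that] by blast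
    then show ?thesis by (metis (no_types, lifting))
  qed
  finally show ?thesis by simp
qed

lemma restr_trace_delete:
  assumes "x \<in> Z"
  shows "restr (trace Z H) (Z - {x}) = trace (Z - {x}) (restr H (\<Union>H - {x}))"
proof
  show "restr (trace Z H) (Z - {x}) \<subseteq> trace (Z - {x}) (restr H (\<Union>H - {x}))"
  proof
    fix W assume "W \<in> restr (trace Z H) (Z - {x})"
    then obtain X where X: "X \<in> H" "W = X \<inter> Z" "W \<noteq> {}" "W \<subseteq> Z - {x}"
      unfolding restr_def trace_def by blast
    then have "x \<notin> X" using assms by blast
    then have "X \<in> restr H (\<Union>H - {x})" "W = X \<inter> (Z - {x})"
      using X unfolding restr_def by blast+
    then show "W \<in> trace (Z - {x}) (restr H (\<Union>H - {x}))"
      using X(3) unfolding trace_def by blast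
  qed
  show "trace (Z - {x}) (restr H (\<Union>H - {x})) \<subseteq> restr (trace Z H) (Z - {x})"
    unfolding restr_def trace_def by blast
qed

lemma block_subset: "hyp_partition H P \<Longrightarrow> B \<in> P \<Longrightarrow> B \<subseteq> H"
  using hyp_partition_Union by blast

lemma hypergraph_block: "hyp_partition H P \<Longrightarrow> B \<in> P \<Longrightarrow> hypergraph H \<Longrightarrow> hypergraph B"
  using block_subset unfolding hypergraph_def by (meson finite_subset subsetD)

lemma atomic_block:
  assumes "hyp_partition H P" "B \<in> P" "atomic H"
  shows "atomic B"
  unfolding atomic_def
proof
  fix y assume y: "y \<in> \<Union>B"
  then have "{y} \<in> H" using block_subset[OF assms(1,2)] assms(3) unfolding atomic_def by blast
  then show "{y} \<in> B" using hyp_partition_member[OF assms(1) _ assms(2)] y by blast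
qed

lemma saturated_block:
  assumes "hyp_partition H P" "B \<in> P" "saturated H"
  shows "saturated B"
  unfolding saturated_def
proof (intro ballI impI)
  fix X1 X2 assume X: "X1 \<in> B" "X2 \<in> B" "X1 \<inter> X2 \<noteq> {}"
  then have "X1 \<in> H" "X2 \<in> H" using block_subset[OF assms(1,2)] by blast+
  then have "X1 \<union> X2 \<in> H" using assms(3) X(3) unfolding saturated_def by blast
  moreover have "(X1 \<union> X2) \<inter> \<Union>B \<noteq> {}" using X by blast
  ultimately show "X1 \<union> X2 \<in> B" using hyp_partition_member[OF assms(1) _ assms(2)] by blast
qed

lemma restr_block:
  assumes "hypergraph H" "hyp_partition H P" "B \<in> P" "Y \<subseteq> \<Union>B"
  shows "restr H Y = restr B Y"
proof
  show "restr B Y \<subseteq> restr H Y"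
    using block_subset[OF assms(2,3)] unfolding restr_def by blast
  show "restr H Y \<subseteq> restr B Y"
  proof
    fix X assume "X \<in> restr H Y"
    then have X: "X \<in> H" "X \<subseteq> Y" "X \<noteq> {}"
      using assms(1) unfolding restr_def hypergraph_def by auto
    then have "X \<inter> \<Union>B \<noteq> {}" using assms(4) by blast
    then show "X \<in> restr B Y"
      using hyp_partition_member[OF assms(2) X(1) assms(3)] X(2) unfolding restr_def by blast
  qed
qed

section \<open>Constructions\<close>

lemma construction_member:
  "construction H K \<Longrightarrow> X \<in> K \<Longrightarrow> X \<noteq> {} \<and> X \<subseteq> \<Union>H"
proof (induction arbitrary: X rule: construction.induct)
  case empty
  then show ?case by simp
next
  case (conn H x K)
  show ?case
  proof (cases "X = \<Union>H")
    case False
    then have "X \<in> K" using conn.prems by simp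
    moreover have "\<Union>(restr H (\<Union>H - {x})) \<subseteq> \<Union>H" unfolding restr_def by blast
    ultimately show ?thesis using conn.IH by blast
  qed (use conn.hyps(3) in simp)
next
  case (disconn H P f)
  then obtain B where B: "B \<in> P" "X \<in> f B" by blast
  have "B \<subseteq> H"
    using block_subset disconn.hyps(4) B(1) unfolding finest_hyp_partition_def by blast
  then show ?case using disconn.IH B by blast
qed

text \<open>Gluing: constructions of connected hypergraphs with pairwise disjoint
  carriers combine to a construction of their union (rule (2), or the piece
  itself if there is only one).\<close>
lemma construction_glue:
  assumes hg: "hypergraph G" and at: "atomic G" and Qne: "Q \<noteq> {}" and QG: "\<Union>Q = G"
    and pieces: "\<And>B. B \<in> Q \<Longrightarrow> B \<noteq> {} \<and> hconnected B \<and> construction B (g B)"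
    and disj: "\<And>B1 B2. B1 \<in> Q \<Longrightarrow> B2 \<in> Q \<Longrightarrow> B1 \<noteq> B2 \<Longrightarrow> \<Union>B1 \<inter> \<Union>B2 = {}"
  shows "construction G (\<Union>B\<in>Q. g B)"
proof -
  have ne: "{} \<notin> G" and fin: "finite G" using hg unfolding hypergraph_def by auto
  have carrier_ne: "\<Union>B \<noteq> {}" if "B \<in> Q" for B
  proof -
    from pieces[OF that] obtain X where X: "X \<in> B" by blast
    then have "X \<noteq> {}" using that QG ne by auto
    then show ?thesis using X by blast
  qed
  have hp: "hyp_partition G Q"
  proof (rule hyp_partitionI)
    show "B1 \<inter> B2 = {}" if "B1 \<in> Q" "B2 \<in> Q" "B1 \<noteq> B2" for B1 B2
    proof -
      have "X = {}" if "X \<in> B1" "X \<in> B2" for X using disj[OF \<open>B1 \<in> Q\<close> \<open>B2 \<in> Q\<close> \<open>B1 \<noteq> B2\<close>] that by blast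
      moreover have "X \<noteq> {}" if "X \<in> B1" for X using that \<open>B1 \<in> Q\<close> QG ne by auto
      ultimately show ?thesis by blast
    qed
  qed (use QG pieces disj carrier_ne in auto)
  have "finite Q" using QG fin by (metis finite_UnionD)
  show ?thesis
  proof (cases "card Q \<ge> 2")
    case True
    then have "Q \<noteq> {G}" by auto
    moreover have "G \<noteq> {}" using Qne QG pieces by auto
    ultimately have "\<not> hconnected G" using not_hconnectedI[OF hp ne] by auto
    moreover have "finest_hyp_partition G Q" unfolding finest_hyp_partition_def using hp pieces by auto
    ultimately show ?thesis using construction.disconn[OF hg at _ _ True, of g] pieces by auto
  next
    case False
    moreover have "card Q > 0" using \<open>finite Q\<close> Qne by (simp add: card_gt_0_iff)
    ultimately have "card Q = 1" by linarith
    then obtain B where "Q = {B}" using card_1_singletonE by blast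
    then show ?thesis using QG pieces by auto
  qed
qed

section \<open>Continuations\<close>

lemma continuation_insert:
  "continuation H Y K (insert X J) = insert (hunion H X Y) (continuation H Y K J)"
  unfolding continuation_def by blast

lemma continuation_Un:
  "continuation H Y K (J \<union> R) = continuation H Y K J \<union> (\<lambda>X. hunion H X Y) ` R"
  unfolding continuation_def by blast

lemma continuation_cong:
  "(\<And>X. X \<in> J \<Longrightarrow> hunion H X Y = hunion H' X Y) \<Longrightarrow> continuation H Y K J = continuation H' Y K J"
  unfolding continuation_def by (metis (no_types, lifting))

lemma hunion_restr: "X \<union> Y \<subseteq> S \<Longrightarrow> hunion (restr H S) X Y = hunion H X Y"
  unfolding hunion_def restr_def by auto

lemma hunion_block:
  assumes "hyp_partition H P" "B \<in> P" "(X \<union> Y) \<inter> \<Union>B \<noteq> {}"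
  shows "hunion H X Y = hunion B X Y"
  using hyp_partition_member[OF assms(1) _ assms(2,3)] block_subset[OF assms(1,2)]
  unfolding hunion_def by auto

lemma continuation_determines_parts:
  assumes K: "\<And>W. W \<in> K \<Longrightarrow> W \<subseteq> Y"
    and J: "\<And>X. X \<in> J \<Longrightarrow> X \<noteq> {} \<and> X \<subseteq> Z" and YZ: "Y \<inter> Z = {}"
  shows "restr (continuation H Y K J) Y = K" and "trace Z (continuation H Y K J) = J"
proof -
  have hJ: "hunion H X Y \<inter> Z = X" "\<not> hunion H X Y \<subseteq> Y" if "X \<in> J" for X
    using J[OF that] YZ unfolding hunion_def by auto
  have L: "continuation H Y K J = K \<union> (\<lambda>X. hunion H X Y) ` J"
    unfolding continuation_def Setcompr_eq_image by simp
  show "restr (continuation H Y K J) Y = K"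
    unfolding L restr_def using K hJ(2) by auto
  have "trace Z K = {}" using K YZ unfolding trace_def by blast
  moreover have "trace Z ((\<lambda>X. hunion H X Y) ` J) = J"
  proof -
    have "{W \<in> (\<lambda>X. hunion H X Y) ` J. W \<inter> Z \<noteq> {}} = (\<lambda>X. hunion H X Y) ` J"
      using J hJ(1) by auto
    then have "trace Z ((\<lambda>X. hunion H X Y) ` J) = (\<lambda>X. hunion H X Y \<inter> Z) ` J"
      unfolding trace_conv_image by (simp add: image_image)
    also have "\<dots> = J" using hJ(1) by simp
    finally show ?thesis .
  qed
  ultimately show "trace Z (continuation H Y K J) = J" unfolding L trace_Un by simp
qed

lemma hconnected_trace:
  assumes hg: "hypergraph H" and at: "atomic H" and sat: "saturated H"
    and conn: "hconnected H" and Z: "Z \<subseteq> \<Union>H" "Z \<noteq> {}"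
  shows "hconnected (trace Z H)" and "\<Union>(trace Z H) = Z"
proof -
  show carrier: "\<Union>(trace Z H) = Z" using Union_trace[OF at, of Z] Z(1) by (simp add: Int_absorb2)
  have "H \<noteq> {}" using Z by auto
  then have "\<Union>H \<in> H" by (rule carrier_mem_if_hconnected[OF hg sat conn])
  then have "Z \<in> trace Z H" using Z unfolding trace_def by blast
  then show "hconnected (trace Z H)"
    using hconnected_if_carrier_mem hypergraph_trace[OF hg] carrier unfolding hypergraph_def by metis
qed

text \<open>If Y lies in the carrier of the block B0, the complement of Y contains the
  carriers of all other blocks, so tracing on it only affects B0.\<close>
lemma trace_complement_in_block:
  assumes hg: "hypergraph H" and hp: "hyp_partition H P" and B0: "B0 \<in> P"
    and Ysub: "Y \<subseteq> \<Union>B0"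
  shows "trace (\<Union>H - Y) H = trace (\<Union>B0 - Y) B0 \<union> \<Union>(P - {B0})"
proof -
  have "H = B0 \<union> \<Union>(P - {B0})" using hyp_partition_Union[OF hp] B0 by blast
  moreover have "trace (\<Union>H - Y) B0 = trace (\<Union>B0 - Y) B0"
    by (rule trace_cong) (use block_subset[OF hp B0] in blast)
  moreover have "trace (\<Union>H - Y) (\<Union>(P - {B0})) = \<Union>(P - {B0})"
  proof (rule trace_id)
    fix W assume "W \<in> \<Union>(P - {B0})"
    then obtain B where B: "B \<in> P" "B \<noteq> B0" "W \<in> B" by blast
    then have "W \<in> H" using block_subset[OF hp] by blast
    moreover have "\<Union>B \<inter> \<Union>B0 = {}" using hyp_partition_disjoint_carriers[OF hp B(1) B0 B(2)] .
    ultimately show "W \<noteq> {} \<and> W \<subseteq> \<Union>H - Y"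
      using hg B(3) Ysub unfolding hypergraph_def by blast
  qed
  ultimately show ?thesis by (metis trace_Un)
qed

section \<open>Splitting a construction at one of its members\<close>

definition splits_at :: "'a set set \<Rightarrow> 'a set set \<Rightarrow> 'a set \<Rightarrow> bool" where
  "splits_at H L Y \<longleftrightarrow>
     construction (restr H Y) (restr L Y)
   \<and> construction (trace (\<Union>H - Y) H) (trace (\<Union>H - Y) L)
   \<and> continuation H Y (restr L Y) (trace (\<Union>H - Y) L) = L"

text \<open>Splitting at the carrier is trivial: the trace part is empty.\<close>
lemma splits_at_carrier:
  assumes "construction H L"
  shows "splits_at H L (\<Union>H)"
proof -
  have "restr H (\<Union>H) = H" unfolding restr_def by blast
  moreover have "restr L (\<Union>H) = L" using construction_member[OF assms] unfolding restr_def by blast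
  moreover have "continuation H (\<Union>H) L {} = L" unfolding continuation_def by simp
  ultimately show ?thesis
    unfolding splits_at_def using assms construction.empty by (simp add: trace_empty)
qed

text \<open>The trace part of rule (1): deleting x from a saturated connected H and
  tracing on Z - {x} leaves the hypergraph just below the top set Z of _Z H,
  so a construction of the former extends by Z to one of _Z H.\<close>
lemma construction_trace_conn:
  assumes hg: "hypergraph H" and at: "atomic H" and sat: "saturated H"
    and conn: "hconnected H" and xZ: "x \<in> Z" and Z: "Z \<subseteq> \<Union>H"
    and J: "construction (trace (Z - {x}) (restr H (\<Union>H - {x}))) J"
  shows "construction (trace Z H) (insert Z J)"
proof -
  have Z_ne: "Z \<noteq> {}" using xZ by blast
  note T = hconnected_trace[OF hg at sat conn Z Z_ne]
  have "construction (trace Z H) (insert (\<Union>(trace Z H)) J)"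
  proof (rule construction.conn)
    show "hypergraph (trace Z H)" "atomic (trace Z H)"
      using hypergraph_trace[OF hg] atomic_trace[OF at] .
    show "\<Union>(trace Z H) \<noteq> {}" "x \<in> \<Union>(trace Z H)" "hconnected (trace Z H)"
      using T xZ by auto
    show "construction (restr (trace Z H) (\<Union>(trace Z H) - {x})) J"
      using restr_trace_delete[OF xZ] J T(2) by simp
  qed
  then show ?thesis unfolding T(2) .
qed

text \<open>The restriction to Y
  does not see the top set, while the trace on Z = \<Union>H - Y gains the new top set Z,
  built by rule (1) from the trace of K on Z - {x}.\<close>
lemma splits_at_conn_step:
  assumes hg: "hypergraph H" and at: "atomic H" and sat: "saturated H"
    and conn: "hconnected H" and x: "x \<in> \<Union>H"
    and K: "construction (restr H (\<Union>H - {x})) K" and Y: "Y \<in> K"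
    and IH: "splits_at (restr H (\<Union>H - {x})) K Y"
  shows "splits_at H (insert (\<Union>H) K) Y"
proof -
  define C where "C = \<Union>H"
  define H' where "H' = restr H (C - {x})"
  define Z where "Z = C - Y"
  have CH: "C \<in> H" using carrier_mem_if_hconnected[OF hg sat conn] x unfolding C_def by blast
  have Kmem: "W \<noteq> {} \<and> W \<subseteq> C - {x}" if "W \<in> K" for W
    using construction_member[OF K that] unfolding C_def restr_def by blast
  have Ysub: "Y \<subseteq> C - {x}" using Kmem[OF Y] by blast
  have xZ: "x \<in> Z" using x Ysub unfolding Z_def C_def by blast
  have "\<Union>H' - Y = Z - {x}" using Union_restr[OF at] Ysub unfolding H'_def Z_def C_def by blast
  then have IH': "construction (restr H' Y) (restr K Y)"
      "construction (trace (Z - {x}) H') (trace (Z - {x}) K)"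
      "continuation H' Y (restr K Y) (trace (Z - {x}) K) = K"
    using IH unfolding splits_at_def H'_def C_def by auto
  have restr_H: "restr H Y = restr H' Y" unfolding H'_def restr_def using Ysub by blast
  have restr_L: "restr (insert C K) Y = restr K Y" using Ysub x unfolding restr_def C_def by auto
  have trace_L: "trace Z (insert C K) = insert Z (trace (Z - {x}) K)"
  proof -
    have "trace Z K = trace (Z - {x}) K" by (rule trace_cong) (use Kmem in blast)
    moreover have "trace Z {C} = {Z}" using xZ unfolding trace_def Z_def by blast
    ultimately show ?thesis using trace_Un[of Z "{C}" K] by simp
  qed
  have "Z \<subseteq> \<Union>H" unfolding Z_def C_def by blast
  then have trace_constr: "construction (trace Z H) (insert Z (trace (Z - {x}) K))"
    using construction_trace_conn[OF hg at sat conn xZ] IH'(2) unfolding H'_def C_def by simp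
  have "Z \<union> Y = C" using Ysub unfolding Z_def by blast
  then have "hunion H Z Y = C" using CH unfolding hunion_def by simp
  moreover have "continuation H Y (restr K Y) (trace (Z - {x}) K) = K"
  proof -
    have "hunion H X Y = hunion H' X Y" if "X \<in> trace (Z - {x}) K" for X
      using that Ysub hunion_restr[of X Y "C - {x}" H] unfolding H'_def Z_def trace_def by blast
    then show ?thesis using IH'(3) continuation_cong by metis
  qed
  ultimately have "continuation H Y (restr K Y) (insert Z (trace (Z - {x}) K)) = insert C K"
    by (simp add: continuation_insert)
  moreover have "\<Union>H - Y = Z" unfolding Z_def C_def ..
  ultimately show ?thesis
    unfolding splits_at_def C_def[symmetric] using restr_H restr_L trace_L trace_constr IH'(1) by simp
qed

text \<open>For rule (2), the trace on \<Union>H - Y of H consists of the trace of the block B0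
  containing Y together with all other blocks; gluing the given construction of
  the former with the constructions of the latter gives a construction.\<close>
lemma construction_trace_disconn:
  assumes hg: "hypergraph H" and at: "atomic H"
    and fin: "finest_hyp_partition H P" and card: "card P \<ge> 2"
    and con: "\<And>B. B \<in> P \<Longrightarrow> construction B (f B)"
    and B0: "B0 \<in> P" and sat0: "saturated B0" and Ysub: "Y \<subseteq> \<Union>B0"
    and T0_constr: "construction (trace (\<Union>B0 - Y) B0) (trace (\<Union>B0 - Y) (f B0))"
  shows "construction (trace (\<Union>H - Y) H) (trace (\<Union>B0 - Y) (f B0) \<union> (\<Union>B\<in>P-{B0}. f B))"
proof -
  define Z0 where "Z0 = \<Union>B0 - Y"
  define Q where "Q = P - {B0}"
  define T0 where "T0 = trace Z0 B0"
  have hp: "hyp_partition H P" using fin unfolding finest_hyp_partition_def by simp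
  have disj0: "\<Union>B \<inter> \<Union>B0 = {}" if "B \<in> Q" for B
    using hyp_partition_disjoint_carriers[OF hp _ B0] that unfolding Q_def by blast
  have Qne: "Q \<noteq> {}"
  proof
    assume "Q = {}"
    then have "card P \<le> card {B0}" unfolding Q_def by (intro card_mono) auto
    then show False using card by simp
  qed
  have Q_pieces: "B \<noteq> {} \<and> hconnected B \<and> construction B (f B)" if "B \<in> Q" for B
    using that hyp_partition_nonempty_block[OF hp] con fin
    unfolding Q_def finest_hyp_partition_def by blast
  have Q_disj: "\<Union>B1 \<inter> \<Union>B2 = {}" if "B1 \<in> Q" "B2 \<in> Q" "B1 \<noteq> B2" for B1 B2
    using hyp_partition_disjoint_carriers[OF hp] that unfolding Q_def by blast
  have trace_H: "trace (\<Union>H - Y) H = T0 \<union> \<Union>Q"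
    using trace_complement_in_block[OF hg hp B0 Ysub] unfolding T0_def Z0_def Q_def .
  have hgT: "hypergraph (trace (\<Union>H - Y) H)" and atT: "atomic (trace (\<Union>H - Y) H)"
    using hypergraph_trace[OF hg] atomic_trace[OF at] by auto
  show ?thesis
  proof (cases "Z0 = {}")
    case True
    then show ?thesis
      using construction_glue[OF hgT atT Qne _ Q_pieces Q_disj] trace_H
      unfolding T0_def Z0_def[symmetric] True trace_empty Q_def by simp
  next
    case False
    have "hconnected B0" using fin B0 unfolding finest_hyp_partition_def by blast
    moreover have "Z0 \<subseteq> \<Union>B0" unfolding Z0_def by blast
    ultimately have "hconnected T0" and carrier_T0: "\<Union>T0 = Z0"
      using hconnected_trace[OF hypergraph_block[OF hp B0 hg] atomic_block[OF hp B0 at] sat0]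
        False unfolding T0_def by blast+
    have "T0 \<noteq> {}" using carrier_T0 False by auto
    have T0_disj: "\<Union>T0 \<inter> \<Union>B = {}" if "B \<in> Q" for B
      using disj0[OF that] carrier_T0 unfolding Z0_def by blast
    then have "T0 \<notin> Q" using False carrier_T0 by blast
    define g where "g = f(T0 := trace Z0 (f B0))"
    have "construction (trace (\<Union>H - Y) H) (\<Union>B\<in>insert T0 Q. g B)"
    proof (rule construction_glue[OF hgT atT])
      show "\<Union>(insert T0 Q) = trace (\<Union>H - Y) H" using trace_H by simp
      show "B \<noteq> {} \<and> hconnected B \<and> construction B (g B)" if "B \<in> insert T0 Q" for B
        using that Q_pieces \<open>T0 \<notin> Q\<close> \<open>T0 \<noteq> {}\<close> \<open>hconnected T0\<close> T0_constr
        unfolding g_def T0_def Z0_def by auto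
      show "\<Union>B1 \<inter> \<Union>B2 = {}" if "B1 \<in> insert T0 Q" "B2 \<in> insert T0 Q" "B1 \<noteq> B2" for B1 B2
        using that T0_disj Q_disj by blast
    qed simp
    moreover have "(\<Union>B\<in>insert T0 Q. g B) = trace Z0 (f B0) \<union> (\<Union>B\<in>Q. f B)"
      using \<open>T0 \<notin> Q\<close> unfolding g_def by auto
    ultimately show ?thesis unfolding Z0_def Q_def by simp
  qed
qed

text \<open>Restriction to Y only sees B0; the constructions R of the other blocks pass
  unchanged into the trace and are fixed by the continuation, since W \<union> Y meets
  two different blocks for W \<in> R.\<close>
lemma splits_at_disconn_step:
  assumes hg: "hypergraph H" and at: "atomic H"
    and fin: "finest_hyp_partition H P" and card: "card P \<ge> 2"
    and con: "\<And>B. B \<in> P \<Longrightarrow> construction B (f B)"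
    and B0: "B0 \<in> P" and sat0: "saturated B0" and Y: "Y \<in> f B0"
    and IH: "splits_at B0 (f B0) Y"
  shows "splits_at H (\<Union>B\<in>P. f B) Y"
proof -
  define R where "R = (\<Union>B\<in>P-{B0}. f B)"
  define Z0 where "Z0 = \<Union>B0 - Y"
  have hp: "hyp_partition H P" using fin unfolding finest_hyp_partition_def by simp
  have Ysub: "Y \<noteq> {}" "Y \<subseteq> \<Union>B0" using construction_member[OF con[OF B0] Y] by auto
  have L: "(\<Union>B\<in>P. f B) = f B0 \<union> R" unfolding R_def using B0 by blast
  have R_mem: "W \<noteq> {} \<and> W \<subseteq> \<Union>B \<and> \<Union>B \<inter> \<Union>B0 = {}"
    if "B \<in> P" "B \<noteq> B0" "W \<in> f B" for B W
    using construction_member[OF con[OF that(1)] that(3)]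
      hyp_partition_disjoint_carriers[OF hp that(1) B0 that(2)] by blast
  have R_outside: "W \<noteq> {} \<and> W \<subseteq> \<Union>H - Y \<and> \<not> W \<subseteq> Y" if "W \<in> R" for W
  proof -
    obtain B where B: "B \<in> P" "B \<noteq> B0" "W \<in> f B" using \<open>W \<in> R\<close> unfolding R_def by blast
    have "\<Union>B \<subseteq> \<Union>H" using block_subset[OF hp B(1)] by blast
    then show ?thesis using R_mem[OF B] Ysub by blast
  qed
  have restr_L: "restr (\<Union>B\<in>P. f B) Y = restr (f B0) Y"
    using R_outside unfolding L restr_def by blast
  have trace_L: "trace (\<Union>H - Y) (\<Union>B\<in>P. f B) = trace Z0 (f B0) \<union> R"
  proof -
    have "trace (\<Union>H - Y) (f B0) = trace Z0 (f B0)"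
      unfolding Z0_def by (rule trace_cong)
        (use construction_member[OF con[OF B0]] block_subset[OF hp B0] in blast)
    moreover have "trace (\<Union>H - Y) R = R" using R_outside by (intro trace_id) blast
    ultimately show ?thesis unfolding L trace_Un by simp
  qed
  have "continuation H Y (restr (f B0) Y) (trace Z0 (f B0)) = f B0"
  proof -
    have "(X \<union> Y) \<inter> \<Union>B0 \<noteq> {}" for X using Ysub by blast
    then have "hunion H X Y = hunion B0 X Y" if "X \<in> trace Z0 (f B0)" for X
      by (rule hunion_block[OF hp B0])
    then have "continuation H Y (restr (f B0) Y) (trace Z0 (f B0))
             = continuation B0 Y (restr (f B0) Y) (trace Z0 (f B0))"
      by (rule continuation_cong)
    also have "\<dots> = f B0" using IH unfolding splits_at_def Z0_def by blast
    finally show ?thesis .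
  qed
  moreover have "hunion H W Y = W" if "W \<in> R" for W
  proof -
    obtain B where B: "B \<in> P" "B \<noteq> B0" "W \<in> f B" using \<open>W \<in> R\<close> unfolding R_def by blast
    then have "(W \<union> Y) \<inter> \<Union>B \<noteq> {}" using R_mem[OF B] by blast
    then have "hunion H W Y = hunion B W Y" using hunion_block[OF hp B(1)] by blast
    moreover have "W \<union> Y \<notin> B" using R_mem[OF B] Ysub by blast
    ultimately show ?thesis unfolding hunion_def by simp
  qed
  ultimately have "continuation H Y (restr (f B0) Y) (trace Z0 (f B0) \<union> R) = f B0 \<union> R"
    by (simp add: continuation_Un)
  moreover have "construction (trace (\<Union>H - Y) H) (trace Z0 (f B0) \<union> R)"
    using construction_trace_disconn[OF hg at fin card con B0 sat0 Ysub(2)] IH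
    unfolding splits_at_def Z0_def R_def by blast
  moreover have "restr H Y = restr B0 Y" using restr_block[OF hg hp B0 Ysub(2)] .
  ultimately show ?thesis
    using IH unfolding splits_at_def restr_L trace_L L[symmetric] by simp
qed

lemma construction_splits_at:
  assumes "construction H L" "saturated H" "Y \<in> L"
  shows "splits_at H L Y"
  using assms
proof (induction arbitrary: Y rule: construction.induct)
  case empty
  then show ?case by simp
next
  case (conn H x K)
  show ?case
  proof (cases "Y = \<Union>H")
    case True
    then show ?thesis using splits_at_carrier construction.conn[OF conn.hyps] by simp
  next
    case False
    then have "Y \<in> K" using conn.prems(2) by simp
    moreover have "saturated (restr H (\<Union>H - {x}))" using saturated_restr conn.prems(1) .
    ultimately have "splits_at (restr H (\<Union>H - {x})) K Y" using conn.IH by blast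
    then show ?thesis
      using splits_at_conn_step[OF conn.hyps(1,2) conn.prems(1) conn.hyps(4-6) \<open>Y \<in> K\<close>] by blast
  qed
next
  case (disconn H P f)
  obtain B0 where B0: "B0 \<in> P" "Y \<in> f B0" using disconn.prems(2) by blast
  have "saturated B0"
    using saturated_block disconn.hyps(4) B0(1) disconn.prems(1)
    unfolding finest_hyp_partition_def by blast
  then have "splits_at B0 (f B0) Y" using disconn.IH B0 by blast
  moreover have "construction B (f B)" if "B \<in> P" for B using disconn.IH that by blast
  ultimately show ?case
    using splits_at_disconn_step[OF disconn.hyps(1,2,4,5)] B0 \<open>saturated B0\<close> by blast
qed

theorem proposition7p8:
  fixes H L :: "'a set set" and Y Z :: "'a set"
  assumes "ASC H"
    and "construction H L"
    and "Y \<in> L"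
    and "Z = \<Union>H - Y"
  shows "construction (restr H Y) (restr L Y)
       \<and> construction (trace Z H) (trace Z L)
       \<and> continuation H Y (restr L Y) (trace Z L) = L
       \<and> (\<forall>K J. construction (restr H Y) K \<and> construction (trace Z H) J
                 \<and> continuation H Y K J = L \<longrightarrow> K = restr L Y \<and> J = trace Z L)"
proof -
  have "splits_at H L Y"
    using construction_splits_at[OF assms(2) _ assms(3)] assms(1) unfolding ASC_def by blast
  moreover have "K = restr L Y \<and> J = trace Z L"
    if K: "construction (restr H Y) K" and J: "construction (trace Z H) J"
      and KJ: "continuation H Y K J = L" for K J
  proof -
    have K_in: "W \<subseteq> Y" if "W \<in> K" for W
      using construction_member[OF K that] unfolding restr_def by blast
    have J_in: "X \<noteq> {} \<and> X \<subseteq> Z" if "X \<in> J" for X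
      using construction_member[OF J that] unfolding trace_def by blast
    have "Y \<inter> Z = {}" using assms(4) by blast
    from continuation_determines_parts[where K = K and J = J and Y = Y and Z = Z and H = H,
        OF K_in J_in this] show ?thesis
      unfolding KJ by simp
  qed
  ultimately show ?thesis unfolding splits_at_def assms(4) by blast
qed

end
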